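(* Let $n$ be a positive integer and $t\ge 3$. Then $\tilde{R}(\dot C^{(rbr)}_{t},Q_n)\le (t-1)n$.
   Context: $\dot C_t^{(rbr)}$ denotes the chain on $t$ vertices colored alternately red and blue, with red minimal vertex. $Q_N$ is the Boolean lattice of all subsets of an $N$-element set ordered by inclusion. In a blue/red coloring of $Q_N$, a copy of a colored poset $\dot P$ is an induced subposet isomorphic to $P$ with matching colors. The poset Erdős–Hajnal number $\tilde{R}(\dot P,Q_n)$ is the minimum $N$ such that every blue/red coloring of $Q_N$ contains a copy of $\dot P$ or a monochromatic induced copy of $Q_n$. *)

theory Defs
  imports Main
begin

datatype color = Red | Blue

text \<open>A blue/red coloring of the Boolean lattice Q_N is a map c on subsets of {0..<N};
  only its values on subsets of {0..<N} matter.\<close>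

definition has_copy ::
  "nat \<Rightarrow> (nat set \<Rightarrow> color) \<Rightarrow> 'a set \<Rightarrow> ('a \<Rightarrow> 'a \<Rightarrow> bool) \<Rightarrow> ('a \<Rightarrow> color) \<Rightarrow> bool" where
  "has_copy N c P le col \<longleftrightarrow>
     (\<exists>f. inj_on f P \<and> (\<forall>x\<in>P. f x \<subseteq> {0..<N} \<and> c (f x) = col x) \<and>
          (\<forall>x\<in>P. \<forall>y\<in>P. le x y \<longleftrightarrow> f x \<subseteq> f y))"

definition has_mono_Q :: "nat \<Rightarrow> (nat set \<Rightarrow> color) \<Rightarrow> nat \<Rightarrow> bool" where
  "has_mono_Q N c n \<longleftrightarrow> (\<exists>k. has_copy N c (Pow {0..<n}) (\<subseteq>) (\<lambda>_. k))"

definition poset_EH ::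
  "'a set \<Rightarrow> ('a \<Rightarrow> 'a \<Rightarrow> bool) \<Rightarrow> ('a \<Rightarrow> color) \<Rightarrow> nat \<Rightarrow> nat" where
  "poset_EH P le col n =
     (LEAST N. \<forall>c. has_copy N c P le col \<or> has_mono_Q N c n)"

text \<open>The chain on t vertices colored alternately red and blue, minimal vertex red:
  vertices 0 < 1 < ... < t-1, vertex i red iff i is even.\<close>
definition chain_rbr_col :: "nat \<Rightarrow> color" where
  "chain_rbr_col i = (if even i then Red else Blue)"

end

theory Submission
  imports Defs
begin

(* Induction on t, each step spending n new coordinates. If W is the top of an alternating
   chain in Q_N, the cube {W \<union> (N + T) | T \<subseteq> [n]} in Q_(N+n) either contains an element of
   the next colour, which extends the chain, or is monochromatic in the colour of W.
   For t = 3 split Q_2n into a lower half S \<subseteq> [n] and an upper half with top Y = n + [n].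
   If some S and S \<union> Y are both red, the cube between them is red or contains a blue middle.
   Otherwise let L be the down-set of those S all of whose subsets are blue; since L is
   down-closed, S \<mapsto> (if S \<in> L then S else S \<union> Y) embeds Q_n, and a red image S \<union> Y yields a
   red S' \<subseteq> S, hence the chain S' \<subset> S' \<union> Y \<subset> S \<union> Y coloured red, blue, red. *)

definition rbr_chain :: "nat \<Rightarrow> (nat set \<Rightarrow> color) \<Rightarrow> nat \<Rightarrow> (nat \<Rightarrow> nat set) \<Rightarrow> bool" where
  "rbr_chain N c t g \<longleftrightarrow>
     strict_mono_on {0..<t} g \<and> (\<forall>i<t. g i \<subseteq> {0..<N} \<and> c (g i) = chain_rbr_col i)"

lemma neq_chain_rbr_col_Suc_iff: "x \<noteq> chain_rbr_col (Suc i) \<longleftrightarrow> x = chain_rbr_col i"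
  by (cases x) (auto simp: chain_rbr_col_def)

lemma has_copy_if_rbr_chain:
  assumes "rbr_chain N c t g"
  shows "has_copy N c {0..<t} (\<le>) chain_rbr_col"
proof -
  have mono: "strict_mono_on {0..<t} g"
    using assms by (simp add: rbr_chain_def)
  show ?thesis
    unfolding has_copy_def
  proof (intro exI conjI)
    show "inj_on g {0..<t}"
      using mono by (rule strict_mono_on_imp_inj_on)
    show "\<forall>i\<in>{0..<t}. \<forall>j\<in>{0..<t}. i \<le> j \<longleftrightarrow> g i \<subseteq> g j"
      using strict_mono_on_less_eq[OF mono] by blast
  qed (use assms in \<open>auto simp: rbr_chain_def\<close>)
qed

lemma rbr_chain_3I:
  assumes "a \<subseteq> b" "b \<subseteq> d" "d \<subseteq> {0..<N}" "c a = Red" "c b = Blue" "c d = Red"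
  shows "\<exists>g. rbr_chain N c 3 g"
proof
  have "a \<subset> b" "b \<subset> d" "a \<subset> d"
    using assms by auto
  then show "rbr_chain N c 3 (nth [a, b, d])"
    using assms
    by (auto simp: rbr_chain_def strict_mono_on_def chain_rbr_col_def less_Suc_eq numeral_3_eq_3)
qed

lemma rbr_chain_snoc:
  assumes chain: "rbr_chain N c (Suc t) g" and "g t \<subseteq> X" "X \<subseteq> {0..<M}" "N \<le> M"
    and colour: "c X = chain_rbr_col (Suc t)"
  shows "rbr_chain M c (Suc (Suc t)) (g(Suc t := X))"
proof -
  have mono: "strict_mono_on {0..<Suc t} g"
    and g: "\<forall>i<Suc t. g i \<subseteq> {0..<N} \<and> c (g i) = chain_rbr_col i"
    using chain by (auto simp: rbr_chain_def)
  have "g t \<subset> X"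
    using \<open>g t \<subseteq> X\<close> colour g neq_chain_rbr_col_Suc_iff by blast
  then have "g i \<subset> X" if "i \<le> t" for i
    using strict_mono_on_leD[OF mono, of i t] that by auto
  then have "strict_mono_on {0..<Suc (Suc t)} (g(Suc t := X))"
    using mono by (auto simp: strict_mono_on_def less_Suc_eq)
  moreover have "g i \<subseteq> {0..<M}" if "i < Suc t" for i
    using g that \<open>N \<le> M\<close> by fastforce
  ultimately show ?thesis
    using g \<open>X \<subseteq> {0..<M}\<close> colour by (auto simp: rbr_chain_def less_Suc_eq)
qed

lemma has_mono_QI:
  assumes "\<And>A B. A \<subseteq> {0..<n} \<Longrightarrow> B \<subseteq> {0..<n} \<Longrightarrow> h A \<subseteq> h B \<longleftrightarrow> A \<subseteq> B"
    and "\<And>A. A \<subseteq> {0..<n} \<Longrightarrow> h A \<subseteq> {0..<N}"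
    and "\<And>A. A \<subseteq> {0..<n} \<Longrightarrow> c (h A) = k"
  shows "has_mono_Q N c n"
  unfolding has_mono_Q_def has_copy_def
proof (intro exI conjI)
  show "inj_on h (Pow {0..<n})"
    by (rule inj_onI) (use assms(1) in blast)
qed (use assms in auto)

lemma has_mono_Q_mono:
  assumes "has_mono_Q N c n" "N \<le> M"
  shows "has_mono_Q M c n"
proof -
  have "{0..<N} \<subseteq> {0..<M}"
    using \<open>N \<le> M\<close> by auto
  then show ?thesis
    using assms(1) unfolding has_mono_Q_def has_copy_def by (meson order_trans)
qed

lemma union_shift_subset_iff:
  fixes A B P Q :: "nat set"
  assumes "A \<subseteq> {0..<m}" "B \<subseteq> {0..<m}"
  shows "A \<union> (+) m ` P \<subseteq> B \<union> (+) m ` Q \<longleftrightarrow> A \<subseteq> B \<and> P \<subseteq> Q"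
  using assms by (auto; fastforce)

lemma has_mono_Q_shifted_cube:
  assumes "W \<subseteq> {0..<N}" "\<And>T. T \<subseteq> {0..<n} \<Longrightarrow> c (W \<union> (+) N ` T) = k"
  shows "has_mono_Q (N + n) c n"
  by (rule has_mono_QI[where h = "\<lambda>T. W \<union> (+) N ` T"])
    (use assms union_shift_subset_iff[OF assms(1) assms(1)] in auto)

lemma rbr_chain_extend_or_has_mono_Q:
  assumes chain: "rbr_chain N c (Suc t) g"
  shows "(\<exists>g'. rbr_chain (N + n) c (Suc (Suc t)) g') \<or> has_mono_Q (N + n) c n"
proof -
  have top: "g t \<subseteq> {0..<N}"
    using chain by (simp add: rbr_chain_def)
  show ?thesis
  proof (cases "\<exists>T\<subseteq>{0..<n}. c (g t \<union> (+) N ` T) = chain_rbr_col (Suc t)")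
    case True
    then obtain T where "T \<subseteq> {0..<n}" "c (g t \<union> (+) N ` T) = chain_rbr_col (Suc t)"
      by blast
    then have "rbr_chain (N + n) c (Suc (Suc t)) (g(Suc t := g t \<union> (+) N ` T))"
      using top by (intro rbr_chain_snoc[OF chain]) auto
    then show ?thesis by blast
  next
    case False
    then have "c (g t \<union> (+) N ` T) = chain_rbr_col t" if "T \<subseteq> {0..<n}" for T
      using that neq_chain_rbr_col_Suc_iff by blast
    then show ?thesis
      using has_mono_Q_shifted_cube[OF top] by blast
  qed
qed

lemma rbr_chain_3_or_has_mono_Q_if_red_pair:
  assumes S: "S \<subseteq> {0..<n}" "c S = Red" "c (S \<union> (+) n ` {0..<n}) = Red"
  shows "(\<exists>g. rbr_chain (2 * n) c 3 g) \<or> has_mono_Q (2 * n) c n"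
proof (cases "\<forall>T\<subseteq>{0..<n}. c (S \<union> (+) n ` T) = Red")
  case True
  then have "has_mono_Q (n + n) c n"
    using has_mono_Q_shifted_cube[OF S(1)] by blast
  then show ?thesis
    by (simp add: mult_2)
next
  case False
  then obtain T where T: "T \<subseteq> {0..<n}" "c (S \<union> (+) n ` T) = Blue"
    by (metis color.exhaust)
  have "S \<union> (+) n ` T \<subseteq> S \<union> (+) n ` {0..<n}" "S \<union> (+) n ` {0..<n} \<subseteq> {0..<2 * n}"
    using S(1) T(1) by auto
  then show ?thesis
    using rbr_chain_3I[of S "S \<union> (+) n ` T"] S T by blast
qed

lemma rbr_chain_3_or_has_mono_Q_if_no_red_pair:
  assumes no_red_pair: "\<And>S. S \<subseteq> {0..<n} \<Longrightarrow> c S = Blue \<or> c (S \<union> (+) n ` {0..<n}) = Blue"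
  shows "(\<exists>g. rbr_chain (2 * n) c 3 g) \<or> has_mono_Q (2 * n) c n"
proof -
  define Y where "Y = (+) n ` {0..<n}"
  define L where "L = {S. \<forall>S'\<subseteq>S. c S' = Blue}"
  define h where "h S = S \<union> (+) n ` (if S \<in> L then {} else {0..<n})" for S
  have h_embedding: "h A \<subseteq> h B \<longleftrightarrow> A \<subseteq> B" if "A \<subseteq> {0..<n}" "B \<subseteq> {0..<n}" for A B
  proof -
    have "A \<subseteq> B \<Longrightarrow> B \<in> L \<Longrightarrow> A \<in> L"
      unfolding L_def by blast
    then show ?thesis
      unfolding h_def using union_shift_subset_iff[OF that] by auto
  qed
  show ?thesis
  proof (cases "\<forall>S\<subseteq>{0..<n}. c (h S) = Blue")
    case True
    have "has_mono_Q (2 * n) c n"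
    proof (rule has_mono_QI[where h = h])
      fix A assume "A \<subseteq> {0..<n}"
      then show "h A \<subseteq> {0..<2 * n}"
        unfolding h_def by auto
    qed (use h_embedding True in blast)+
    then show ?thesis ..
  next
    case False
    then obtain S where S: "S \<subseteq> {0..<n}" "c (h S) = Red"
      by (metis color.exhaust)
    have "S \<notin> L"
    proof
      assume "S \<in> L"
      then have "c (h S) = Blue"
        unfolding h_def L_def by auto
      with S(2) show False by simp
    qed
    then have red_top: "c (S \<union> Y) = Red"
      using S unfolding h_def Y_def by simp
    obtain S' where S': "S' \<subseteq> S" "c S' = Red"
      using \<open>S \<notin> L\<close> color.exhaust unfolding L_def by blast
    then have "c (S' \<union> Y) = Blue"
      using no_red_pair[of S'] S(1) unfolding Y_def by auto
    moreover have "S' \<union> Y \<subseteq> S \<union> Y" "S \<union> Y \<subseteq> {0..<2 * n}"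
      using S(1) S'(1) unfolding Y_def by auto
    ultimately show ?thesis
      using rbr_chain_3I[of S' "S' \<union> Y" "S \<union> Y"] S' red_top by blast
  qed
qed

lemma rbr_chain_3_or_has_mono_Q: "(\<exists>g. rbr_chain (2 * n) c 3 g) \<or> has_mono_Q (2 * n) c n"
proof (cases "\<exists>S\<subseteq>{0..<n}. c S = Red \<and> c (S \<union> (+) n ` {0..<n}) = Red")
  case True
  then show ?thesis
    using rbr_chain_3_or_has_mono_Q_if_red_pair by blast
next
  case False
  then have "c S = Blue \<or> c (S \<union> (+) n ` {0..<n}) = Blue" if "S \<subseteq> {0..<n}" for S
    using that color.exhaust by blast
  then show ?thesis
    by (rule rbr_chain_3_or_has_mono_Q_if_no_red_pair)
qed

lemma rbr_chain_or_has_mono_Q: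
  assumes "t \<ge> 2"
  shows "(\<exists>g. rbr_chain (t * n) c (Suc t) g) \<or> has_mono_Q (t * n) c n"
  using assms
proof (induction t rule: nat_induct_at_least)
  case base
  then show ?case
    using rbr_chain_3_or_has_mono_Q by (simp add: numeral_3_eq_3)
next
  case (Suc t)
  have N: "Suc t * n = t * n + n"
    by simp
  from Suc.IH show ?case
    unfolding N
  proof
    assume "\<exists>g. rbr_chain (t * n) c (Suc t) g"
    then show "(\<exists>g. rbr_chain (t * n + n) c (Suc (Suc t)) g) \<or> has_mono_Q (t * n + n) c n"
      using rbr_chain_extend_or_has_mono_Q by blast
  qed (use has_mono_Q_mono le_add1 in blast)
qed

theorem lemma16:
  fixes n t :: nat
  assumes "n \<ge> 1" and "t \<ge> 3"
  shows "poset_EH {0..<t} (\<le>) chain_rbr_col n \<le> (t - 1) * n"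
proof -
  \<comment> \<open>The bound also holds for n = 0.\<close>
  obtain s where t: "t = Suc s" and "s \<ge> 2"
    using assms(2) by (metis Suc_le_D Suc_le_mono numeral_3_eq_3 numeral_2_eq_2)
  have "has_copy (s * n) c {0..<t} (\<le>) chain_rbr_col \<or> has_mono_Q (s * n) c n" for c
    using rbr_chain_or_has_mono_Q[OF \<open>s \<ge> 2\<close>, of n c] has_copy_if_rbr_chain
    unfolding t by blast
  then show ?thesis
    unfolding poset_EH_def t by (simp add: Least_le)
qed

end
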